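(* Let $A$ be a cyclic Leibniz algebra generated by $a$, with notation as in the context. For $1\le j\le s$ and $1\le i\le n_j$ put $U_{j,i}=\{b\in A: p_j(L_a)^i(b)=0\}$. Then $A^2$ is abelian, $A^2=U_{1,n_1-1}\oplus U_{2,n_2}\oplus\cdots\oplus U_{s,n_s}$, and every $U_{j,i}$ with $(j,i)\neq(1,n_1)$ is a (two-sided) ideal of $A$.
   Context: A (left) Leibniz algebra is an algebra satisfying $x(yz)=(xy)z+y(xz)$ for all $x,y,z$; all algebras are finite-dimensional over a field $F$. $A$ is a cyclic Leibniz algebra generated by $a$: $A$ is generated as an algebra by the single element $a$, and with $a^1=a$, $a^{k+1}=aa^k$, the elements $a,a^2,\dots,a^n$ form a basis of $A$. Write $aa^n=\alpha_2a^2+\cdots+\alpha_na^n$. $L_a:A\to A$ is $b\mapsto ab$, with characteristic (and minimal) polynomial $p(x)=x^n-\alpha_nx^{n-1}-\cdots-\alpha_2x=p_1(x)^{n_1}\cdots p_s(x)^{n_s}$, the $p_j$ distinct monic irreducibles over $F$, $p_1(x)=x$. $A^2=AA$. *)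

theory Defs
  imports Main "HOL-Computational_Algebra.Computational_Algebra"
begin

text \<open>Left-normed powers: apow m a 1 = a, apow m a (k+1) = m a (apow m a k).
  (apow m a 0 = 0 is a dummy value and never used.)\<close>
fun apow :: "('v::zero \<Rightarrow> 'v \<Rightarrow> 'v) \<Rightarrow> 'v \<Rightarrow> nat \<Rightarrow> 'v" where
  "apow m a 0 = 0"
| "apow m a (Suc 0) = a"
| "apow m a (Suc (Suc k)) = m a (apow m a (Suc k))"

definition poly_op :: "('f::field \<Rightarrow> 'v::ab_group_add \<Rightarrow> 'v) \<Rightarrow> 'f poly \<Rightarrow> ('v \<Rightarrow> 'v) \<Rightarrow> 'v \<Rightarrow> 'v" where
  "poly_op scale p f b = (\<Sum>i\<le>degree p. scale (coeff p i) ((f ^^ i) b))"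

definition is_ideal :: "('f::field \<Rightarrow> 'v::ab_group_add \<Rightarrow> 'v) \<Rightarrow> ('v \<Rightarrow> 'v \<Rightarrow> 'v) \<Rightarrow> 'v set \<Rightarrow> bool" where
  "is_ideal scale m I \<longleftrightarrow> module.subspace scale I \<and> (\<forall>x u. u \<in> I \<longrightarrow> m x u \<in> I \<and> m u x \<in> I)"

definition alg_square :: "('f::field \<Rightarrow> 'v::ab_group_add \<Rightarrow> 'v) \<Rightarrow> ('v \<Rightarrow> 'v \<Rightarrow> 'v) \<Rightarrow> 'v set" where
  "alg_square scale m = module.span scale {m x y | x y. True}"

end

theory Submission
  imports Defs
begin

text \<open>
  The Leibniz identity gives (a^k) z = 0 for k >= 2, so A^2 = span {a^2, ..., a^n} is
  annihilated from the left; in particular A^2 is abelian.  The characteristic polynomial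
  p = x^n - alpha_n x^(n-1) - ... - alpha_2 x annihilates L (a is a cyclic vector), and
  writing p = x q one gets A^2 = ker q(L): one inclusion because a^k = L(a^(k-1)), the other
  because q(L) a is a^n plus a combination of lower powers, hence nonzero.  With
  q = P_1^(N_1 - 1) P_2^N_2 ... P_s^N_s the factors are pairwise coprime, so the primary
  decomposition of ker q(L) gives the direct sum.  Finally every ker r(L) with r dividing q is
  a two-sided ideal: it lies in A^2 (so right products vanish) and is L-invariant (left
  products, since only a acts nontrivially from the left).
\<close>

definition comaximal :: "'a::comm_ring_1 \<Rightarrow> 'a \<Rightarrow> bool" where
  "comaximal f g \<longleftrightarrow> (\<exists>r t. r * f + t * g = 1)"

lemma comaximal_commute: "comaximal f g \<Longrightarrow> comaximal g f"
  unfolding comaximal_def by (metis add.commute)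

text \<open>Comaximality is preserved under products: multiply the two Bezout relations.\<close>
lemma comaximal_mult_right:
  assumes "comaximal f g" "comaximal f h"
  shows "comaximal f (g * h)"
proof -
  obtain r t r' t' where "r * f + t * g = 1" and "r' * f + t' * h = 1"
    using assms unfolding comaximal_def by blast
  then have "(r * f + t * g) * (r' * f + t' * h) = 1" by simp
  then have "(r * r' * f + r * t' * h + t * g * r') * f + (t * t') * (g * h) = 1"
    by (simp add: algebra_simps)
  then show ?thesis unfolding comaximal_def by blast
qed

lemma comaximal_prod_right:
  "(\<And>i. i \<in> A \<Longrightarrow> comaximal f (g i)) \<Longrightarrow> comaximal f (\<Prod>i\<in>A. g i)"
proof (induction A rule: infinite_finite_induct)
  case (insert i A)
  then show ?case by (simp add: comaximal_mult_right)
qed (auto simp: comaximal_def intro: exI[of _ 0])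

lemma comaximal_power:
  assumes "comaximal f g" shows "comaximal (f ^ j) (g ^ k)"
proof -
  have "comaximal x (y ^ k)" if "comaximal x y" for x y :: 'a and k
    using comaximal_prod_right[of "{..<k}" x "\<lambda>_. y"] that by simp
  then show ?thesis using assms by (blast intro: comaximal_commute)
qed

lemma coprime_imp_comaximal:
  fixes a b :: "'a::euclidean_ring"
  assumes "coprime a b" shows "comaximal a b"
  using assms
proof (induction b arbitrary: a rule: measure_induct_rule[of euclidean_size])
  case (less b)
  show ?case
  proof (cases "b = 0")
    case True
    then have "is_unit a" using less.prems by simp
    then obtain k where "1 = a * k" by (elim dvdE)
    then have "k * a + 0 * b = 1" by (simp add: mult.commute)
    then show ?thesis unfolding comaximal_def by blast
  next
    case False
    then have "coprime b (a mod b)" using less.prems by (simp add: ac_simps)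
    moreover have "euclidean_size (a mod b) < euclidean_size b"
      using False by (rule mod_size_less)
    ultimately have "comaximal b (a mod b)" using less.IH by blast
    then obtain r t where "r * b + t * (a mod b) = 1" unfolding comaximal_def by blast
    then have "t * a + (r - t * (a div b)) * b = 1"
      by (simp add: minus_div_mult_eq_mod[symmetric] algebra_simps)
    then show ?thesis unfolding comaximal_def by blast
  qed
qed

lemma monic_irreducibles_coprime:
  fixes p q :: "'a::field poly"
  assumes "irreducible p" "irreducible q" "lead_coeff p = 1" "lead_coeff q = 1" "p \<noteq> q"
  shows "coprime p q"
proof (rule coprimeI, rule ccontr)
  fix d assume "d dvd p" "d dvd q" "\<not> is_unit d"
  then have "p dvd q" using irreducibleD'[OF assms(1)] dvd_trans by blast
  then obtain c where c: "q = p * c" by (elim dvdE)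
  have "is_unit c" using irreducibleD[OF assms(2) c] irreducible_not_unit[OF assms(1)] by blast
  then obtain c0 where "c = [:c0:]" by (auto simp: is_unit_poly_iff)
  then have "c = 1" using c assms(3,4) by (cases "c0 = 0") (simp_all add: one_pCons)
  then show False using c assms(5) by simp
qed

lemma monic_irreducible_powers_comaximal:
  fixes P :: "'i \<Rightarrow> 'a::field poly"
  assumes "\<And>j. j \<in> J \<Longrightarrow> irreducible (P j) \<and> lead_coeff (P j) = 1" "inj_on P J"
  shows "pairwise (\<lambda>j k. comaximal (P j ^ e j) (P k ^ e k)) J"
proof (rule pairwiseI)
  fix j k assume jk: "j \<in> J" "k \<in> J" "j \<noteq> k"
  then have "P j \<noteq> P k" using assms(2) by (auto dest: inj_onD)
  then have "coprime (P j) (P k)"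
    using assms(1)[OF jk(1)] assms(1)[OF jk(2)] by (intro monic_irreducibles_coprime) auto
  then show "comaximal (P j ^ e j) (P k ^ e k)"
    by (intro comaximal_power coprime_imp_comaximal)
qed

text \<open>Splitting one factor off the first power in a product of powers; this writes the
  characteristic polynomial as x times its cofactor.\<close>
lemma prod_power_split_first:
  fixes f :: "nat \<Rightarrow> 'a::comm_monoid_mult"
  assumes "1 \<le> s" "1 \<le> N 1"
  shows "(\<Prod>j=1..s. f j ^ N j) = f 1 * (\<Prod>j=1..s. f j ^ (if j = 1 then N 1 - 1 else N j))"
proof -
  let ?e = "\<lambda>j. if j = 1 then N 1 - 1 else N j"
  have one: "1 \<in> {1..s}" using assms(1) by simp
  have "(\<Prod>j=1..s. f j ^ N j) = f 1 ^ N 1 * (\<Prod>j\<in>{1..s} - {1}. f j ^ N j)"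
    by (rule prod.remove[OF finite_atLeastAtMost one])
  also have "f 1 ^ N 1 = f 1 * f 1 ^ ?e 1"
    using assms(2) by (simp add: power_eq_if)
  also have "(\<Prod>j\<in>{1..s} - {1}. f j ^ N j) = (\<Prod>j\<in>{1..s} - {1}. f j ^ ?e j)"
    by (rule prod.cong) auto
  also have "f 1 * f 1 ^ ?e 1 * (\<Prod>j\<in>{1..s} - {1}. f j ^ ?e j) = f 1 * (\<Prod>j=1..s. f j ^ ?e j)"
    by (simp only: prod.remove[OF finite_atLeastAtMost one] mult.assoc)
  finally show ?thesis .
qed

locale linear_endomorphism = vector_space scale
  for scale :: "'f::field \<Rightarrow> 'v::ab_group_add \<Rightarrow> 'v" +
  fixes L :: "'v \<Rightarrow> 'v"
  assumes linear_L: "Vector_Spaces.linear scale scale L"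
begin

abbreviation poly_L :: "'f poly \<Rightarrow> 'v \<Rightarrow> 'v" where
  "poly_L p \<equiv> poly_op scale p L"

lemma L_hom: "module_hom scale scale L"
  using linear_L by (simp add: Vector_Spaces.linear_iff_module_hom)

lemmas L_add = module_hom.add[OF L_hom]
  and L_scale = module_hom.scale[OF L_hom]
  and L_zero [simp] = module_hom.zero[OF L_hom]
  and L_diff = module_hom.diff[OF L_hom]
  and L_sum = module_hom.sum[OF L_hom]

lemma poly_op_upto:
  assumes "degree p \<le> K"
  shows "poly_L p b = (\<Sum>i\<le>K. scale (coeff p i) ((L ^^ i) b))"
  unfolding poly_op_def
  by (rule sum.mono_neutral_left) (use assms in \<open>auto simp: coeff_eq_0\<close>)

lemma poly_L_pCons: "poly_L (pCons c p) b = scale c b + L (poly_L p b)"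
proof -
  have "poly_L (pCons c p) b
      = (\<Sum>i\<le>Suc (degree p). scale (coeff (pCons c p) i) ((L ^^ i) b))"
    by (rule poly_op_upto) (rule degree_pCons_le)
  also have "\<dots> = scale c b + (\<Sum>i\<le>degree p. scale (coeff p i) ((L ^^ Suc i) b))"
    by (subst sum.atMost_Suc_shift) simp
  also have "(\<Sum>i\<le>degree p. scale (coeff p i) ((L ^^ Suc i) b)) = L (poly_L p b)"
    unfolding poly_op_def L_sum by (simp add: L_scale)
  finally show ?thesis .
qed

lemma poly_L_0 [simp]: "poly_L 0 b = 0"
  unfolding poly_op_def by simp

lemma poly_L_linear: "Vector_Spaces.linear scale scale (poly_L p)"
proof -
  have "poly_L p (x + y) = poly_L p x + poly_L p y \<and>
        poly_L p (scale c x) = scale c (poly_L p x)" for x y c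
    by (induction p) (simp_all add: poly_L_pCons L_add L_scale scale_left_commute algebra_simps)
  then show ?thesis unfolding Vector_Spaces.linear_iff using vector_space_axioms by blast
qed

lemma poly_L_hom: "module_hom scale scale (poly_L p)"
  using poly_L_linear by (simp add: Vector_Spaces.linear_iff_module_hom)

lemmas poly_L_add_right = module_hom.add[OF poly_L_hom]
  and poly_L_scale_right = module_hom.scale[OF poly_L_hom]
  and poly_L_zero_right = module_hom.zero[OF poly_L_hom]
  and poly_L_diff_right = module_hom.diff[OF poly_L_hom]
  and poly_L_sum_right = module_hom.sum[OF poly_L_hom]
  and kernel_subspace = module_hom.subspace_kernel[OF poly_L_hom]

lemma poly_L_add: "poly_L (p + q) b = poly_L p b + poly_L q b"
  by (induction p q rule: poly_induct2) (simp_all add: poly_L_pCons L_add scale_left_distrib)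

lemma poly_L_diff: "poly_L (p - q) b = poly_L p b - poly_L q b"
  by (induction p q rule: poly_induct2) (simp_all add: poly_L_pCons L_diff scale_left_diff_distrib)

lemma poly_L_sum: "poly_L (\<Sum>i\<in>A. f i) b = (\<Sum>i\<in>A. poly_L (f i) b)"
  by (induction A rule: infinite_finite_induct) (simp_all add: poly_L_add)

lemma poly_L_smult: "poly_L (smult c p) b = scale c (poly_L p b)"
  by (induction p) (simp_all add: poly_L_pCons L_scale scale_right_distrib)

lemma poly_L_mult: "poly_L (p * q) b = poly_L p (poly_L q b)"
proof (induction p arbitrary: b)
  case (pCons c p)
  then show ?case by (simp add: poly_L_add poly_L_smult poly_L_pCons)
qed simp

lemma poly_L_one [simp]: "poly_L 1 b = b"
  using poly_L_pCons[of 1 0 b] by (simp add: one_pCons[symmetric])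

lemma poly_L_X: "poly_L [:0, 1:] b = L b"
  using poly_L_pCons[of 0 1 b] by (simp add: one_pCons[symmetric])

lemma poly_L_funpow: "(poly_L p ^^ k) b = poly_L (p ^ k) b"
  by (induction k arbitrary: b) (simp_all add: poly_L_mult)

lemma poly_L_commute: "poly_L p (L b) = L (poly_L p b)"
  using poly_L_mult[of p "[:0,1:]" b] poly_L_mult[of "[:0,1:]" p b]
  by (simp add: poly_L_X mult.commute)

lemma L_funpow_zero [simp]: "(L ^^ k) 0 = 0"
  by (induction k) simp_all

lemma poly_L_commute_funpow: "poly_L p ((L ^^ k) b) = (L ^^ k) (poly_L p b)"
  by (induction k) (simp_all add: poly_L_commute)

lemma kernel_mono: "q dvd r \<Longrightarrow> poly_L q b = 0 \<Longrightarrow> poly_L r b = 0"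
  by (auto simp: mult.commute[of q] poly_L_mult poly_L_zero_right)

lemma kernel_comaximal_disjoint:
  assumes "comaximal f g" "poly_L f u = 0" "poly_L g u = 0"
  shows "u = 0"
proof -
  obtain r t where rt: "r * f + t * g = 1" using assms(1) unfolding comaximal_def by blast
  have "u = poly_L (r * f + t * g) u" by (simp add: rt)
  also have "\<dots> = 0" using assms(2,3) by (simp add: poly_L_add poly_L_mult poly_L_zero_right)
  finally show ?thesis .
qed

lemma kernel_comaximal_split:
  assumes "comaximal f g" "poly_L (f * g) v = 0"
  obtains x y where "v = x + y" "poly_L f x = 0" "poly_L g y = 0"
proof -
  obtain r t where rt: "r * f + t * g = 1" using assms(1) unfolding comaximal_def by blast
  have v: "v = poly_L (t * g) v + poly_L (r * f) v"
    using poly_L_add[of "r * f" "t * g" v] rt by (simp add: add.commute)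
  have "poly_L f (poly_L (t * g) v) = poly_L t (poly_L (f * g) v)"
    and "poly_L g (poly_L (r * f) v) = poly_L r (poly_L (f * g) v)"
    by (simp_all add: poly_L_mult[symmetric] ac_simps)
  then show ?thesis using that[OF v] assms(2) by (simp add: poly_L_zero_right)
qed

lemma kernel_prod_split:
  assumes "finite J" "pairwise (\<lambda>j k. comaximal (Q j) (Q k)) J"
    and "poly_L (\<Prod>j\<in>J. Q j) v = 0"
  shows "\<exists>u. v = (\<Sum>j\<in>J. u j) \<and> (\<forall>j\<in>J. poly_L (Q j) (u j) = 0)"
  using assms
proof (induction J arbitrary: v rule: finite_induct)
  case empty
  then show ?case by simp
next
  case (insert j J)
  have "comaximal (Q j) (\<Prod>k\<in>J. Q k)"
    using insert.hyps(2) insert.prems(1) by (intro comaximal_prod_right) (auto simp: pairwise_def)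
  moreover have "poly_L (Q j * (\<Prod>k\<in>J. Q k)) v = 0" using insert by simp
  ultimately obtain x y where xy: "v = x + y" "poly_L (Q j) x = 0" "poly_L (\<Prod>k\<in>J. Q k) y = 0"
    by (rule kernel_comaximal_split)
  obtain u where u: "y = (\<Sum>k\<in>J. u k)" "\<forall>k\<in>J. poly_L (Q k) (u k) = 0"
    using insert.IH[of y] xy(3) insert.prems(1) by (auto simp: pairwise_insert)
  have v_sum: "v = (\<Sum>k\<in>insert j J. (u(j := x)) k)"
    using insert.hyps xy(1) u(1) by (auto intro!: sum.cong)
  have u_ker: "\<forall>k\<in>insert j J. poly_L (Q k) ((u(j := x)) k) = 0"
    using xy(2) u(2) insert.hyps(2) by auto
  show ?case by (rule exI[of _ "u(j := x)"], intro conjI) (fact v_sum, fact u_ker)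
qed

lemma kernel_prod_decomposition:
  assumes "finite J" "pairwise (\<lambda>j k. comaximal (Q j) (Q k)) J"
  shows "{v. poly_L (\<Prod>j\<in>J. Q j) v = 0} = {(\<Sum>j\<in>J. u j) | u. \<forall>j\<in>J. poly_L (Q j) (u j) = 0}"
proof (intro equalityI subsetI)
  fix v assume "v \<in> {v. poly_L (\<Prod>j\<in>J. Q j) v = 0}"
  then show "v \<in> {(\<Sum>j\<in>J. u j) | u. \<forall>j\<in>J. poly_L (Q j) (u j) = 0}"
    using kernel_prod_split[OF assms] by blast
next
  fix v assume "v \<in> {(\<Sum>j\<in>J. u j) | u. \<forall>j\<in>J. poly_L (Q j) (u j) = 0}"
  then obtain u where v: "v = (\<Sum>j\<in>J. u j)" and u: "\<forall>j\<in>J. poly_L (Q j) (u j) = 0"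
    by blast
  have "poly_L (\<Prod>k\<in>J. Q k) (u j) = 0" if "j \<in> J" for j
    by (rule kernel_mono[of "Q j"]) (use that assms(1) u in auto)
  then show "v \<in> {v. poly_L (\<Prod>j\<in>J. Q j) v = 0}"
    by (simp add: v poly_L_sum_right)
qed

lemma kernel_prod_unique:
  assumes "finite J" "pairwise (\<lambda>j k. comaximal (Q j) (Q k)) J"
    and "\<forall>j\<in>J. poly_L (Q j) (u j) = 0" "(\<Sum>j\<in>J. u j) = 0" "j \<in> J"
  shows "u j = 0"
proof (rule kernel_comaximal_disjoint)
  let ?R = "\<Prod>k\<in>J - {j}. Q k"
  show "comaximal (Q j) ?R"
    using assms(2,5) by (intro comaximal_prod_right) (auto simp: pairwise_def)
  show "poly_L (Q j) (u j) = 0" using assms(3,5) by blast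
  have "(\<Sum>k\<in>J - {j}. poly_L ?R (u k)) = 0"
    using assms(1,3) by (intro sum.neutral) (auto intro: kernel_mono)
  then have "poly_L ?R (\<Sum>k\<in>J. u k) = poly_L ?R (u j)"
    using assms(1,5) by (simp add: poly_L_sum_right sum.remove poly_L_add_right)
  then show "poly_L ?R (u j) = 0" using assms(4) by (simp add: poly_L_zero_right)
qed

lemma poly_L_monom: "poly_L (monom c k) b = scale c ((L ^^ k) b)"
proof (induction k)
  case 0
  then show ?case using poly_L_pCons[of c 0 b] by (simp add: monom_0)
next
  case (Suc k)
  then show ?case by (simp add: monom_Suc poly_L_pCons L_scale)
qed

lemma poly_L_in_span_iterates:
  assumes "\<And>i. i \<ge> k \<Longrightarrow> coeff p i = 0"
  shows "poly_L p b \<in> span {(L ^^ i) b | i. i < k}"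
  unfolding poly_op_def
proof (rule span_sum)
  fix i
  show "scale (coeff p i) ((L ^^ i) b) \<in> span {(L ^^ i) b | i. i < k}"
  proof (cases "i < k")
    case True
    then show ?thesis by (intro span_scale span_base) auto
  next
    case False
    then show ?thesis using assms by (simp add: span_zero)
  qed
qed

end

locale cyclic_leibniz_algebra = vector_space scale
  for scale :: "'f::field \<Rightarrow> 'v::ab_group_add \<Rightarrow> 'v" +
  fixes m :: "'v \<Rightarrow> 'v \<Rightarrow> 'v" and a :: 'v and n :: nat and \<alpha> :: "nat \<Rightarrow> 'f"
  assumes lin_r: "\<And>x. Vector_Spaces.linear scale scale (m x)"
    and lin_l: "\<And>y. Vector_Spaces.linear scale scale (\<lambda>x. m x y)"
    and leibniz: "\<And>x y z. m x (m y z) = m (m x y) z + m y (m x z)"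
    and n_pos: "n \<ge> 1"
    and inj: "inj_on (apow m a) {1..n}"
    and indep: "\<not> dependent (apow m a ` {1..n})"
    and spans: "span (apow m a ` {1..n}) = UNIV"
    and alpha: "m a (apow m a n) = (\<Sum>i=2..n. scale (\<alpha> i) (apow m a i))"

sublocale cyclic_leibniz_algebra \<subseteq> linear_endomorphism scale "m a"
  by (intro linear_endomorphism.intro linear_endomorphism_axioms.intro vector_space_axioms lin_r)

context cyclic_leibniz_algebra
begin

lemma left_mult_hom: "module_hom scale scale (\<lambda>x. m x y)"
  using lin_l by (simp add: Vector_Spaces.linear_iff_module_hom)

lemma apow_Suc: "k \<ge> 1 \<Longrightarrow> apow m a (Suc k) = m a (apow m a k)"
  by (cases k) simp_all

lemma apow_pred: "k \<ge> 2 \<Longrightarrow> apow m a k = m a (apow m a (k - 1))"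
  by (cases k) (simp_all add: apow_Suc)

lemma iterate_generator: "(m a ^^ i) a = apow m a (Suc i)"
  by (induction i) (simp_all add: apow_Suc)

lemma apow_left_annihilates: "k \<ge> 2 \<Longrightarrow> m (apow m a k) z = 0"
proof (induction k arbitrary: z rule: nat_induct_at_least)
  case base
  show ?case using leibniz[of a a z] by (simp add: numeral_2_eq_2)
next
  case (Suc k)
  then show ?case using leibniz[of a "apow m a k" z] by (simp add: apow_Suc)
qed

lemma basis_induct:
  assumes "subspace T" "\<And>k. k \<in> {1..n} \<Longrightarrow> apow m a k \<in> T"
  shows "x \<in> T"
proof -
  have "apow m a ` {1..n} \<subseteq> T" using assms(2) by blast
  then have "span (apow m a ` {1..n}) \<subseteq> T" using assms(1) by (rule span_minimal)
  then show ?thesis using spans by blast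
qed

lemma mult_in_tail_span: "m x y \<in> span (apow m a ` {2..n})"
proof -
  let ?S = "span (apow m a ` {2..n})"
  have "apow m a k \<in> ?S" if "k \<in> {2..n}" for k
    using that by (intro span_base) auto
  have "y \<in> m a -` ?S"
  proof (rule basis_induct)
    show "subspace (m a -` ?S)" by (rule module_hom.subspace_vimage[OF L_hom]) simp
  next
    fix k assume k: "k \<in> {1..n}"
    show "apow m a k \<in> m a -` ?S"
    proof (cases "k = n")
      case True
      have "m a (apow m a n) \<in> ?S"
        unfolding alpha by (rule span_sum, rule span_scale, rule span_base) auto
      then show ?thesis using True by simp
    next
      case False
      then show ?thesis using k \<open>\<And>k. k \<in> {2..n} \<Longrightarrow> apow m a k \<in> ?S\<close>
        by (simp add: apow_Suc[symmetric])
    qed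
  qed
  moreover have "x \<in> (\<lambda>x. m x y) -` ?S"
  proof (rule basis_induct)
    show "subspace ((\<lambda>x. m x y) -` ?S)" by (rule module_hom.subspace_vimage[OF left_mult_hom]) simp
  next
    fix k assume "k \<in> {1..n}"
    then show "apow m a k \<in> (\<lambda>x. m x y) -` ?S"
      using \<open>y \<in> m a -` ?S\<close> by (cases "k = 1") (simp_all add: apow_left_annihilates span_zero)
  qed
  ultimately show ?thesis by simp
qed

lemma square_eq_tail_span: "alg_square scale m = span (apow m a ` {2..n})"
proof
  show "alg_square scale m \<subseteq> span (apow m a ` {2..n})"
    unfolding alg_square_def by (rule span_minimal) (auto intro: mult_in_tail_span)
  have "apow m a k \<in> {m x y | x y. True}" if "k \<in> {2..n}" for k
  proof -
    have "apow m a k = m a (apow m a (k - 1))" using that by (simp add: apow_pred)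
    then show ?thesis by blast
  qed
  then show "span (apow m a ` {2..n}) \<subseteq> alg_square scale m"
    unfolding alg_square_def by (intro span_mono) auto
qed

lemma square_annihilates_left:
  assumes "u \<in> alg_square scale m" shows "m u z = 0"
proof -
  have "span (apow m a ` {2..n}) \<subseteq> {u. m u z = 0}"
    using apow_left_annihilates
    by (intro span_minimal module_hom.subspace_kernel[OF left_mult_hom]) auto
  then show ?thesis using assms square_eq_tail_span by auto
qed

definition char_poly :: "'f poly" where
  "char_poly = monom 1 n - (\<Sum>i=2..n. monom (\<alpha> i) (i - 1))"

lemma char_poly_annihilates: "poly_L char_poly v = 0"
proof -
  have "poly_L char_poly a = m a (apow m a n) - (\<Sum>i=2..n. scale (\<alpha> i) (apow m a i))"
    using n_pos
    by (simp add: char_poly_def poly_L_diff poly_L_sum poly_L_monom iterate_generator apow_Suc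
        Suc_diff_1)
  then have generator: "poly_L char_poly a = 0" by (simp add: alpha)
  have "v \<in> {v. poly_L char_poly v = 0}"
  proof (rule basis_induct)
    fix k assume "k \<in> {1..n}"
    then have "apow m a k = (m a ^^ (k - 1)) a" by (simp add: iterate_generator)
    then show "apow m a k \<in> {v. poly_L char_poly v = 0}"
      by (simp add: poly_L_commute_funpow generator)
  qed (rule kernel_subspace)
  then show ?thesis by simp
qed

lemma cofactor_coeffs:
  assumes "char_poly = [:0, 1:] * q"
  shows "coeff q (n - 1) = 1" and "\<And>k. k \<ge> n \<Longrightarrow> coeff q k = 0"
proof -
  have coeff_q: "coeff q k = coeff char_poly (Suc k)" for k
    using assms by simp
  show "coeff q (n - 1) = 1"
    using n_pos unfolding coeff_q by (auto simp: char_poly_def coeff_diff coeff_sum intro!: sum.neutral)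
  show "coeff q k = 0" if "k \<ge> n" for k
    using that unfolding coeff_q by (auto simp: char_poly_def coeff_diff coeff_sum intro!: sum.neutral)
qed

text \<open>\<dots> hence q(L_a) a = a^n + (lower powers) is nonzero, by linear independence.\<close>
lemma cofactor_generator_nonzero:
  assumes "char_poly = [:0, 1:] * q"
  shows "poly_L q a \<noteq> 0"
proof
  assume zero: "poly_L q a = 0"
  define r where "r = q - monom 1 (n - 1)"
  have "coeff r i = 0" if "i \<ge> n - 1" for i
    using that cofactor_coeffs[OF assms] by (cases "i = n - 1") (auto simp: r_def)
  then have "poly_L r a \<in> span {(m a ^^ i) a | i. i < n - 1}"
    by (rule poly_L_in_span_iterates)
  moreover have "{(m a ^^ i) a | i. i < n - 1} \<subseteq> apow m a ` {1..n} - {apow m a n}"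
    using inj n_pos by (auto simp: iterate_generator inj_on_eq_iff)
  ultimately have r_span: "poly_L r a \<in> span (apow m a ` {1..n} - {apow m a n})"
    using span_mono by blast
  have "poly_L q a = apow m a n + poly_L r a"
    using n_pos by (simp add: r_def poly_L_diff poly_L_monom iterate_generator)
  then have "apow m a n = - poly_L r a"
    using zero by (simp add: eq_neg_iff_add_eq_0)
  then have "apow m a n \<in> span (apow m a ` {1..n} - {apow m a n})"
    using r_span by (simp add: span_neg)
  moreover have "apow m a n \<in> apow m a ` {1..n}" using n_pos by simp
  ultimately have "dependent (apow m a ` {1..n})"
    unfolding dependent_def by blast
  then show False using indep by contradiction
qed

lemma square_eq_kernel:
  assumes "char_poly = [:0, 1:] * q"
  shows "alg_square scale m = {v. poly_L q v = 0}"
proof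
  have "poly_L q (apow m a k) = 0" if "k \<in> {2..n}" for k
  proof -
    have "poly_L q (apow m a k) = poly_L q (m a (apow m a (k - 1)))"
      using that by (simp add: apow_pred)
    also have "\<dots> = poly_L (q * [:0, 1:]) (apow m a (k - 1))"
      by (simp only: poly_L_mult poly_L_X)
    also have "\<dots> = poly_L char_poly (apow m a (k - 1))"
      by (simp only: assms mult.commute)
    finally show ?thesis by (simp only: char_poly_annihilates)
  qed
  then show square_sub: "alg_square scale m \<subseteq> {v. poly_L q v = 0}"
    unfolding square_eq_tail_span by (intro span_minimal kernel_subspace) auto
  show "{v. poly_L q v = 0} \<subseteq> alg_square scale m"
  proof
    fix v assume v: "v \<in> {v. poly_L q v = 0}"
    have "{1..n} = insert 1 {2..n}" using n_pos by auto
    then have "v \<in> span (insert a (apow m a ` {2..n}))" using spans by simp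
    then obtain c where c: "v - scale c a \<in> alg_square scale m"
      unfolding span_insert square_eq_tail_span by blast
    then have "scale c (poly_L q a) = 0"
      using square_sub v by (auto simp: poly_L_diff_right poly_L_scale_right)
    then have "c = 0" using cofactor_generator_nonzero[OF assms] by simp
    then show "v \<in> alg_square scale m" using c by simp
  qed
qed

lemma kernel_is_ideal:
  assumes "char_poly = [:0, 1:] * q" "r dvd q"
  shows "is_ideal scale m {v. poly_L r v = 0}"
  unfolding is_ideal_def
proof (intro conjI allI impI)
  show "subspace {v. poly_L r v = 0}" by (rule kernel_subspace)
  fix x u assume u: "u \<in> {v. poly_L r v = 0}"
  then have "u \<in> alg_square scale m"
    using square_eq_kernel[OF assms(1)] kernel_mono[OF assms(2)] by auto
  then show "m u x \<in> {v. poly_L r v = 0}"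
    by (simp add: square_annihilates_left poly_L_zero_right)
  have "x \<in> (\<lambda>x. m x u) -` {v. poly_L r v = 0}"
  proof (rule basis_induct)
    show "subspace ((\<lambda>x. m x u) -` {v. poly_L r v = 0})"
      by (rule module_hom.subspace_vimage[OF left_mult_hom kernel_subspace])
    fix k assume "k \<in> {1..n}"
    then show "apow m a k \<in> (\<lambda>x. m x u) -` {v. poly_L r v = 0}"
      using u by (cases "k = 1") (simp_all add: poly_L_commute apow_left_annihilates poly_L_zero_right)
  qed
  then show "m x u \<in> {v. poly_L r v = 0}" by simp
qed

end

theorem mainTheorem10:
  fixes scale :: "'f::field \<Rightarrow> 'v::ab_group_add \<Rightarrow> 'v"
    and m :: "'v \<Rightarrow> 'v \<Rightarrow> 'v"
    and a :: 'v and n :: nat and \<alpha> :: "nat \<Rightarrow> 'f"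
    and s :: nat and P :: "nat \<Rightarrow> 'f poly" and N :: "nat \<Rightarrow> nat"
  assumes vs: "vector_space scale"
    and lin_r: "\<And>x. Vector_Spaces.linear scale scale (m x)"
    and lin_l: "\<And>y. Vector_Spaces.linear scale scale (\<lambda>x. m x y)"
    and leibniz: "\<And>x y z. m x (m y z) = m (m x y) z + m y (m x z)"
    and n_pos: "n \<ge> 1"
    and inj: "inj_on (apow m a) {1..n}"
    and indep: "\<not> module.dependent scale (apow m a ` {1..n})"
    and spans: "module.span scale (apow m a ` {1..n}) = UNIV"
    and alpha: "m a (apow m a n) = (\<Sum>i=2..n. scale (\<alpha> i) (apow m a i))"
    and factor: "monom 1 n - (\<Sum>i=2..n. monom (\<alpha> i) (i - 1)) = (\<Prod>j=1..s. P j ^ N j)"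
    and s_pos: "s \<ge> 1"
    and P1: "P 1 = [:0, 1:]"
    and P_irr: "\<And>j. j \<in> {1..s} \<Longrightarrow> irreducible (P j) \<and> lead_coeff (P j) = 1"
    and P_inj: "inj_on P {1..s}"
    and N_pos: "\<And>j. j \<in> {1..s} \<Longrightarrow> N j \<ge> 1"
  defines "U \<equiv> (\<lambda>j i. {b. ((poly_op scale (P j) (m a)) ^^ i) b = 0})"
    and "W \<equiv> (\<lambda>j. {b. ((poly_op scale (P j) (m a)) ^^ (if j = 1 then N 1 - 1 else N j)) b = 0})"
  shows "(\<forall>x\<in>alg_square scale m. \<forall>y\<in>alg_square scale m. m x y = 0)
    \<and> alg_square scale m = {(\<Sum>j=1..s. u j) | u. \<forall>j\<in>{1..s}. u j \<in> W j}
    \<and> (\<forall>u. (\<forall>j\<in>{1..s}. u j \<in> W j) \<and> (\<Sum>j=1..s. u j) = 0 \<longrightarrow> (\<forall>j\<in>{1..s}. u j = 0))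
    \<and> (\<forall>j\<in>{1..s}. \<forall>i\<in>{1..N j}. (j, i) \<noteq> (1, N 1) \<longrightarrow> is_ideal scale m (U j i))"
proof -
  interpret cyclic_leibniz_algebra scale m a n \<alpha>
    by (intro cyclic_leibniz_algebra.intro cyclic_leibniz_algebra_axioms.intro vs lin_r lin_l
        leibniz n_pos inj indep spans alpha)
  define Q where "Q j = P j ^ (if j = 1 then N 1 - 1 else N j)" for j
  have "(\<Prod>j=1..s. P j ^ N j) = [:0, 1:] * (\<Prod>j=1..s. Q j)"
    unfolding Q_def P1[symmetric] using s_pos N_pos[of 1]
    by (intro prod_power_split_first) auto
  then have char: "char_poly = [:0, 1:] * (\<Prod>j=1..s. Q j)"
    by (simp only: char_poly_def factor)
  have coprime: "pairwise (\<lambda>j k. comaximal (Q j) (Q k)) {1..s}"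
    unfolding Q_def using P_irr P_inj by (rule monic_irreducible_powers_comaximal)
  have W: "W j = {b. poly_L (Q j) b = 0}" and U: "U j i = {b. poly_L (P j ^ i) b = 0}" for j i
    by (simp_all add: W_def U_def Q_def poly_L_funpow)
  have square: "alg_square scale m = {v. poly_L (\<Prod>j=1..s. Q j) v = 0}"
    by (rule square_eq_kernel[OF char])
  have ideal_dvd: "P j ^ i dvd (\<Prod>j=1..s. Q j)"
    if "j \<in> {1..s}" "i \<in> {1..N j}" "(j, i) \<noteq> (1, N 1)" for j i
  proof -
    have "P j ^ i dvd Q j" using that unfolding Q_def by (intro le_imp_power_dvd) auto
    also have "Q j dvd (\<Prod>j=1..s. Q j)" using that(1) by (intro dvd_prodI) auto
    finally show ?thesis .
  qed
  show ?thesis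
  proof (intro conjI)
    show "\<forall>x\<in>alg_square scale m. \<forall>y\<in>alg_square scale m. m x y = 0"
      using square_annihilates_left by blast
    show "alg_square scale m = {(\<Sum>j=1..s. u j) | u. \<forall>j\<in>{1..s}. u j \<in> W j}"
    proof -
      have "{v. poly_L (\<Prod>j=1..s. Q j) v = 0}
          = {(\<Sum>j=1..s. u j) | u. \<forall>j\<in>{1..s}. poly_L (Q j) (u j) = 0}"
        by (rule kernel_prod_decomposition[OF _ coprime]) simp
      then show ?thesis by (simp add: square W)
    qed
    show "\<forall>u. (\<forall>j\<in>{1..s}. u j \<in> W j) \<and> (\<Sum>j=1..s. u j) = 0 \<longrightarrow> (\<forall>j\<in>{1..s}. u j = 0)"
      using kernel_prod_unique[OF _ coprime] by (simp add: W)
    show "\<forall>j\<in>{1..s}. \<forall>i\<in>{1..N j}. (j, i) \<noteq> (1, N 1) \<longrightarrow> is_ideal scale m (U j i)"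
      using kernel_is_ideal[OF char ideal_dvd] by (simp add: U)
  qed
qed

end
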